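(* Let $G=(V_L,V_R,E)$ be a bipartite graph in which every vertex of $V_L$ has degree at most $\Delta_L$ and every vertex of $V_R$ has degree at least $2$. Let $M\subseteq V_R$ be such that every $v\in V_L$ has exactly one neighbour in $M$. Then for every $u\in V_L$ and $k\ge1$, the number of connected induced subgraphs $G'$ of $G$ such that (1) $u\in V(G')$, (2) $|V(G')\cap V_R|=k$, (3) $\Gamma_G(v)\subseteq V(G')$ for every $v\in V(G')\cap V_R$, and (4) every $v\in V(G')\cap V_L$ has exactly one neighbour in $V(G')\cap M$ and exactly one neighbour in $V(G')\cap(V_R\setminus M)$, is at most $(\Delta_L-1)^{k-1}$.
   Context: $\Gamma_G(v)$ denotes the set of neighbours of $v$ in $G$. *)

theory Defs
  imports Main
begin

definition bipartite_graph :: "'a set \<Rightarrow> 'a set \<Rightarrow> ('a \<Rightarrow> 'a \<Rightarrow> bool) \<Rightarrow> bool" where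
  "bipartite_graph VL VR adj \<longleftrightarrow>
     finite VL \<and> finite VR \<and> VL \<inter> VR = {} \<and>
     (\<forall>x y. adj x y \<longrightarrow> adj y x) \<and>
     (\<forall>x y. adj x y \<longrightarrow> (x \<in> VL \<and> y \<in> VR) \<or> (x \<in> VR \<and> y \<in> VL))"

definition nbrs :: "('a \<Rightarrow> 'a \<Rightarrow> bool) \<Rightarrow> 'a \<Rightarrow> 'a set" where
  "nbrs adj v = {w. adj v w}"

definition degree :: "('a \<Rightarrow> 'a \<Rightarrow> bool) \<Rightarrow> 'a \<Rightarrow> nat" where
  "degree adj v = card (nbrs adj v)"

definition connected_induced :: "('a \<Rightarrow> 'a \<Rightarrow> bool) \<Rightarrow> 'a set \<Rightarrow> bool" where
  "connected_induced adj S \<longleftrightarrow> S \<noteq> {} \<and>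
     (\<forall>x\<in>S. \<forall>y\<in>S. (\<lambda>a b. a \<in> S \<and> b \<in> S \<and> adj a b)\<^sup>*\<^sup>* x y)"

end

theory Submission
  imports Defs
begin

text \<open>Fix an admissible S and grow a set C \<subseteq> VR - M of right vertices known to lie
  in S. The M-neighbours of u and of all neighbours of C lie in S, and by closedness so do
  all their neighbours; call these vertices forced. If every forced left vertex already has
  a neighbour in C, connectivity shows that S is exactly the set of forced vertices.
  Otherwise some forced left vertex v has its unique non-M neighbour in S outside C: at
  most \<Delta>L - 1 choices, each enlarging C. As S \<inter> VR contains C and the M-neighbour
  of u, C stays smaller than k, so the branching depth is at most k - 1.\<close>

locale matched_bipartite_graph =
  fixes VL VR M :: "'a set" and adj :: "'a \<Rightarrow> 'a \<Rightarrow> bool"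
  assumes bipartite: "bipartite_graph VL VR adj"
    and M_subset: "M \<subseteq> VR"
    and card_nbrs_M: "\<forall>v\<in>VL. card (nbrs adj v \<inter> M) = 1"
begin

lemma adj_sym: "adj x y \<Longrightarrow> adj y x"
  using bipartite unfolding bipartite_graph_def by blast

lemma adj_sides: "adj x y \<Longrightarrow> (x \<in> VL \<and> y \<in> VR) \<or> (x \<in> VR \<and> y \<in> VL)"
  using bipartite unfolding bipartite_graph_def by blast

lemma sides_disjoint: "VL \<inter> VR = {}"
  and finite_VL: "finite VL" and finite_VR: "finite VR"
  using bipartite unfolding bipartite_graph_def by auto

lemma nbrs_VR_subset: "c \<in> VR \<Longrightarrow> nbrs adj c \<subseteq> VL"
  using adj_sides sides_disjoint unfolding nbrs_def by blast

lemma nbrs_VL_subset: "v \<in> VL \<Longrightarrow> nbrs adj v \<subseteq> VR"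
  using adj_sides sides_disjoint unfolding nbrs_def by blast

lemma finite_nbrs: "finite (nbrs adj v)"
proof -
  have "nbrs adj v \<subseteq> VL \<union> VR" using adj_sides unfolding nbrs_def by blast
  then show ?thesis using finite_VL finite_VR finite_subset by blast
qed

definition M_nbr :: "'a \<Rightarrow> 'a" where
  "M_nbr v = (THE x. x \<in> nbrs adj v \<inter> M)"

lemma M_nbr_unique:
  assumes "v \<in> VL"
  shows "nbrs adj v \<inter> M = {M_nbr v}"
proof -
  obtain z where "nbrs adj v \<inter> M = {z}"
    using card_nbrs_M assms card_1_singletonE by blast
  then show ?thesis unfolding M_nbr_def by auto
qed

lemma M_nbr_in_M: "v \<in> VL \<Longrightarrow> M_nbr v \<in> M"
  and adj_M_nbr: "v \<in> VL \<Longrightarrow> adj (M_nbr v) v"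
  using M_nbr_unique[of v] adj_sym unfolding nbrs_def by blast+

definition admissible :: "'a \<Rightarrow> nat \<Rightarrow> 'a set set" where
  "admissible u k = {S. S \<subseteq> VL \<union> VR \<and> connected_induced adj S \<and>
                 u \<in> S \<and>
                 card (S \<inter> VR) = k \<and>
                 (\<forall>v\<in>S \<inter> VR. nbrs adj v \<subseteq> S) \<and>
                 (\<forall>v\<in>S \<inter> VL. card (nbrs adj v \<inter> (S \<inter> M)) = 1 \<and>
                               card (nbrs adj v \<inter> (S \<inter> (VR - M))) = 1)}"

definition admissible_over :: "'a \<Rightarrow> nat \<Rightarrow> 'a set \<Rightarrow> 'a set set" where
  "admissible_over u k C = {S \<in> admissible u k. C \<subseteq> S}"

definition forced_M :: "'a \<Rightarrow> 'a set \<Rightarrow> 'a set" where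
  "forced_M u C = insert (M_nbr u) (M_nbr ` (\<Union>c\<in>C. nbrs adj c))"

definition forced_L :: "'a \<Rightarrow> 'a set \<Rightarrow> 'a set" where
  "forced_L u C = (\<Union>x\<in>forced_M u C. nbrs adj x)"

lemma finite_admissible: "finite (admissible u k)"
proof -
  have "admissible u k \<subseteq> Pow (VL \<union> VR)" unfolding admissible_def by blast
  then show ?thesis using finite_VL finite_VR finite_subset by blast
qed

lemma admissible_nbr_sets:
  assumes "S \<in> admissible u k" "v \<in> S" "v \<in> VL"
  obtains m n where "nbrs adj v \<inter> (S \<inter> M) = {m}" "nbrs adj v \<inter> (S \<inter> (VR - M)) = {n}"
proof -
  have "card (nbrs adj v \<inter> (S \<inter> M)) = 1" "card (nbrs adj v \<inter> (S \<inter> (VR - M))) = 1"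
    using assms unfolding admissible_def by blast+
  then show ?thesis using that by (metis card_1_singletonE)
qed

lemma M_nbr_mem_admissible:
  assumes "S \<in> admissible u k" "v \<in> S" "v \<in> VL"
  shows "M_nbr v \<in> S"
proof -
  obtain m n where "nbrs adj v \<inter> (S \<inter> M) = {m}" "nbrs adj v \<inter> (S \<inter> (VR - M)) = {n}"
    by (rule admissible_nbr_sets[OF assms])
  then have "m \<in> nbrs adj v \<inter> M" "m \<in> S" by auto
  then show ?thesis using M_nbr_unique[OF assms(3)] by auto
qed

lemma forced_M_subset_M:
  assumes "u \<in> VL" "C \<subseteq> VR"
  shows "forced_M u C \<subseteq> M"
  using assms nbrs_VR_subset M_nbr_in_M unfolding forced_M_def by blast

lemma forced_L_subset_VL:
  assumes "u \<in> VL" "C \<subseteq> VR"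
  shows "forced_L u C \<subseteq> VL"
  using forced_M_subset_M[OF assms] M_subset nbrs_VR_subset unfolding forced_L_def by blast

lemma forced_M_subset_admissible:
  assumes "u \<in> VL" "S \<in> admissible_over u k C" "C \<subseteq> VR"
  shows "forced_M u C \<subseteq> S"
proof -
  have S: "S \<in> admissible u k" "u \<in> S" "\<forall>c\<in>C. nbrs adj c \<subseteq> S"
    using assms unfolding admissible_over_def admissible_def by blast+
  show ?thesis
    using M_nbr_mem_admissible[OF S(1)] S(2,3) assms(1,3) nbrs_VR_subset
    unfolding forced_M_def by blast
qed

lemma forced_L_subset_admissible:
  assumes "u \<in> VL" "S \<in> admissible_over u k C" "C \<subseteq> VR"
  shows "forced_L u C \<subseteq> S"
proof -
  have "forced_M u C \<subseteq> S \<inter> VR"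
    using forced_M_subset_admissible[OF assms] forced_M_subset_M[OF assms(1,3)] M_subset by blast
  moreover have "\<forall>v\<in>S \<inter> VR. nbrs adj v \<subseteq> S"
    using assms(2) unfolding admissible_over_def admissible_def by blast
  ultimately show ?thesis unfolding forced_L_def by blast
qed

lemma admissible_degree_ge_2:
  assumes "S \<in> admissible u k" "u \<in> VL"
  shows "2 \<le> degree adj u"
proof -
  have "u \<in> S" using assms unfolding admissible_def by blast
  then obtain m n where "nbrs adj u \<inter> (S \<inter> M) = {m}" "nbrs adj u \<inter> (S \<inter> (VR - M)) = {n}"
    by (rule admissible_nbr_sets[OF assms(1) _ assms(2)])
  then have mn: "{m, n} \<subseteq> nbrs adj u" "m \<noteq> n" by auto
  have "2 = card {m, n}" using mn(2) by simp
  also have "\<dots> \<le> card (nbrs adj u)" using mn(1) by (rule card_mono[OF finite_nbrs])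
  finally show ?thesis unfolding degree_def .
qed

lemma admissible_over_empty:
  assumes "u \<in> VL" "finite C" "C \<subseteq> VR - M" "k \<le> card C"
  shows "admissible_over u k C = {}"
proof (rule ccontr)
  assume "admissible_over u k C \<noteq> {}"
  then obtain S where S: "S \<in> admissible_over u k C" by blast
  have S': "S \<in> admissible u k" "C \<subseteq> S"
    using S unfolding admissible_over_def by auto
  have "M_nbr u \<in> S"
    using forced_M_subset_admissible[OF assms(1) S] assms(3) unfolding forced_M_def by blast
  then have "insert (M_nbr u) C \<subseteq> S \<inter> VR"
    using S'(2) assms(3) M_subset M_nbr_in_M[OF assms(1)] by blast
  then have "card (insert (M_nbr u) C) \<le> card (S \<inter> VR)"
    by (simp add: card_mono finite_VR)
  then have "card (insert (M_nbr u) C) \<le> k"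
    using S'(1) unfolding admissible_def by simp
  moreover have "M_nbr u \<notin> C" using M_nbr_in_M[OF assms(1)] assms(3) by blast
  ultimately show False using assms(2,4) by simp
qed

text \<open>Every vertex reachable from u inside S is forced: an edge leaving a forced left
  vertex v ends in M_nbr v or in the unique non-M neighbour of v in S, which lies in C.\<close>

lemma admissible_over_determined:
  assumes "u \<in> VL" "C \<subseteq> VR - M" "\<forall>v\<in>forced_L u C. nbrs adj v \<inter> C \<noteq> {}"
  shows "admissible_over u k C \<subseteq> {forced_M u C \<union> C \<union> forced_L u C}"
proof
  fix S assume S: "S \<in> admissible_over u k C"
  have S_adm: "S \<in> admissible u k" and CS: "C \<subseteq> S"
    using S unfolding admissible_over_def by auto
  have CR: "C \<subseteq> VR" using assms(2) by blast
  have M_nbr_forced: "M_nbr w \<in> forced_M u C" if "w \<in> nbrs adj c" "c \<in> C" for w c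
    using that unfolding forced_M_def by blast
  have forced_L_I: "w \<in> forced_L u C" if "x \<in> forced_M u C" "adj x w" for x w
    using that unfolding forced_L_def nbrs_def by blast
  let ?Z = "forced_M u C \<union> C \<union> forced_L u C"
  have "S \<subseteq> ?Z"
  proof
    fix y assume "y \<in> S"
    then have "(\<lambda>a b. a \<in> S \<and> b \<in> S \<and> adj a b)\<^sup>*\<^sup>* u y"
      using S_adm unfolding admissible_def connected_induced_def by blast
    then show "y \<in> ?Z"
    proof (induction rule: rtranclp_induct)
      case base
      have "M_nbr u \<in> forced_M u C" unfolding forced_M_def by blast
      then show ?case using forced_L_I[OF _ adj_M_nbr[OF assms(1)]] by blast
    next
      case (step a b)
      then have ab: "a \<in> S" "b \<in> S" "adj a b" "a \<in> ?Z" by auto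
      consider "a \<in> forced_M u C" | "a \<in> C" | "a \<in> forced_L u C" using ab(4) by blast
      then show ?case
      proof cases
        case 1
        then show ?thesis using forced_L_I[OF 1 ab(3)] by blast
      next
        case 2
        then have b: "b \<in> nbrs adj a" "b \<in> VL"
          using nbrs_VR_subset CR ab(3) unfolding nbrs_def by auto
        then show ?thesis using forced_L_I[OF M_nbr_forced[OF b(1) 2] adj_M_nbr[OF b(2)]] by blast
      next
        case 3
        then obtain x where x: "x \<in> forced_M u C" "adj x a" unfolding forced_L_def nbrs_def by blast
        have aL: "a \<in> VL" using 3 forced_L_subset_VL[OF assms(1) CR] by blast
        have bR: "b \<in> VR" using nbrs_VL_subset[OF aL] ab(3) unfolding nbrs_def by blast
        show ?thesis
        proof (cases "b \<in> M")
          case True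
          have "x \<in> nbrs adj a \<inter> M" "b \<in> nbrs adj a \<inter> M"
            using x forced_M_subset_M[OF assms(1) CR] adj_sym True ab(3) unfolding nbrs_def by auto
          then have "b = x" using M_nbr_unique[OF aL] by auto
          then show ?thesis using x(1) by blast
        next
          case False
          obtain c where c: "c \<in> nbrs adj a" "c \<in> C" using assms(3) 3 by blast
          obtain m n
            where "nbrs adj a \<inter> (S \<inter> M) = {m}" and non_M: "nbrs adj a \<inter> (S \<inter> (VR - M)) = {n}"
            by (rule admissible_nbr_sets[OF S_adm ab(1) aL])
          have "c \<in> {n}" unfolding non_M[symmetric] using c CS assms(2) by blast
          moreover have "b \<in> {n}" unfolding non_M[symmetric] using ab bR False unfolding nbrs_def by blast
          ultimately have "b = c" by simp
          then show ?thesis using c(2) by blast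
        qed
      qed
    qed
  qed
  moreover have "?Z \<subseteq> S"
    using forced_M_subset_admissible[OF assms(1) S CR] forced_L_subset_admissible[OF assms(1) S CR] CS
    by blast
  ultimately show "S \<in> {?Z}" by simp
qed

lemma admissible_over_branch:
  assumes "u \<in> VL" "C \<subseteq> VR" "v \<in> forced_L u C"
  shows "admissible_over u k C \<subseteq> (\<Union>n\<in>nbrs adj v - M. admissible_over u k (insert n C))"
proof
  fix S assume S: "S \<in> admissible_over u k C"
  have "v \<in> S" "v \<in> VL"
    using forced_L_subset_admissible[OF assms(1) S assms(2)] forced_L_subset_VL[OF assms(1,2)] assms(3)
    by blast+
  moreover have "S \<in> admissible u k" using S unfolding admissible_over_def by blast
  ultimately obtain m n
    where "nbrs adj v \<inter> (S \<inter> M) = {m}" "nbrs adj v \<inter> (S \<inter> (VR - M)) = {n}"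
    using admissible_nbr_sets by blast
  then show "S \<in> (\<Union>n\<in>nbrs adj v - M. admissible_over u k (insert n C))"
    using S unfolding admissible_over_def by blast
qed

lemma card_nbrs_minus_M:
  assumes "v \<in> VL"
  shows "card (nbrs adj v - M) = degree adj v - 1"
  using card_Diff_subset_Int[of "nbrs adj v" M] M_nbr_unique[OF assms] finite_nbrs
  unfolding degree_def by (simp add: Int_commute)

lemma card_admissible_over_determined:
  assumes "u \<in> VL" "C \<subseteq> VR - M" "\<forall>v\<in>forced_L u C. nbrs adj v \<inter> C \<noteq> {}"
  shows "card (admissible_over u k C) \<le> 1"
proof -
  have "card (admissible_over u k C) \<le> card {forced_M u C \<union> C \<union> forced_L u C}"
    by (rule card_mono) (simp_all add: admissible_over_determined[OF assms])
  then show ?thesis by simp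
qed

lemma card_admissible_over_branch:
  assumes "u \<in> VL" "\<forall>v\<in>VL. degree adj v \<le> \<Delta>L" "C \<subseteq> VR" "v \<in> forced_L u C"
    and "\<And>n. n \<in> nbrs adj v - M \<Longrightarrow> card (admissible_over u k (insert n C)) \<le> B"
  shows "card (admissible_over u k C) \<le> (\<Delta>L - 1) * B"
proof -
  have vL: "v \<in> VL" using assms(4) forced_L_subset_VL[OF assms(1,3)] by blast
  have "finite (admissible_over u k (insert n C))" for n
    using finite_admissible unfolding admissible_over_def by simp
  then have "card (admissible_over u k C) \<le> card (\<Union>n\<in>nbrs adj v - M. admissible_over u k (insert n C))"
    by (intro card_mono admissible_over_branch[OF assms(1,3,4)]) (simp add: finite_nbrs)
  also have "\<dots> \<le> (\<Sum>n\<in>nbrs adj v - M. card (admissible_over u k (insert n C)))"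
    by (rule card_UN_le) (simp add: finite_nbrs)
  also have "\<dots> \<le> (\<Sum>n\<in>nbrs adj v - M. B)"
    by (rule sum_mono) (rule assms(5))
  also have "\<dots> = card (nbrs adj v - M) * B"
    by simp
  also have "\<dots> \<le> (\<Delta>L - 1) * B"
    using card_nbrs_minus_M[OF vL] assms(2) vL by (intro mult_right_mono) auto
  finally show ?thesis .
qed

lemma card_admissible_over_le:
  assumes "u \<in> VL" "\<forall>v\<in>VL. degree adj v \<le> \<Delta>L" "finite C" "C \<subseteq> VR - M"
  shows "card (admissible_over u k C) \<le> (\<Delta>L - 1) ^ (k - 1 - card C)"
  using assms(3,4)
proof (induction "k - card C" arbitrary: C rule: less_induct)
  case less
  have CR: "C \<subseteq> VR" using less.prems(2) by blast
  show ?case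
  proof (cases "\<forall>v\<in>forced_L u C. nbrs adj v \<inter> C \<noteq> {}")
    case True
    show ?thesis
    proof (cases "admissible_over u k C = {}")
      case False
      then obtain S where "S \<in> admissible u k" unfolding admissible_over_def by blast
      then have "1 \<le> \<Delta>L - 1"
        using admissible_degree_ge_2 assms(1,2) by fastforce
      then have "1 \<le> (\<Delta>L - 1) ^ (k - 1 - card C)" by simp
      then show ?thesis using card_admissible_over_determined[OF assms(1) less.prems(2) True, of k] by linarith
    qed simp
  next
    case False
    then obtain v where v: "v \<in> forced_L u C" "nbrs adj v \<inter> C = {}" by blast
    have vL: "v \<in> VL" using v(1) forced_L_subset_VL[OF assms(1) CR] by blast
    have grow: "insert n C \<subseteq> VR - M" "card (insert n C) = Suc (card C)" if "n \<in> nbrs adj v - M" for n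
    proof -
      have "n \<notin> C" using that v(2) by blast
      then show "insert n C \<subseteq> VR - M" "card (insert n C) = Suc (card C)"
        using that nbrs_VL_subset[OF vL] less.prems by auto
    qed
    show ?thesis
    proof (cases "Suc (card C) < k")
      case True
      have "card (admissible_over u k C) \<le> (\<Delta>L - 1) * (\<Delta>L - 1) ^ (k - 1 - Suc (card C))"
      proof (rule card_admissible_over_branch[OF assms(1,2) CR v(1)])
        fix n assume n: "n \<in> nbrs adj v - M"
        have "k - card (insert n C) < k - card C" "finite (insert n C)"
          using grow[OF n] True less.prems(1) by auto
        then show "card (admissible_over u k (insert n C)) \<le> (\<Delta>L - 1) ^ (k - 1 - Suc (card C))"
          using less.hyps grow[OF n] by fastforce
      qed
      also have "\<dots> = (\<Delta>L - 1) ^ Suc (k - 1 - Suc (card C))"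
        by simp
      also have "Suc (k - 1 - Suc (card C)) = k - 1 - card C"
        using True by simp
      finally show ?thesis .
    next
      case False
      have "card (admissible_over u k C) \<le> (\<Delta>L - 1) * 0"
      proof (rule card_admissible_over_branch[OF assms(1,2) CR v(1)])
        fix n assume "n \<in> nbrs adj v - M"
        then show "card (admissible_over u k (insert n C)) \<le> 0"
          using admissible_over_empty[OF assms(1)] grow False less.prems(1) by simp
      qed
      then show ?thesis by simp
    qed
  qed
qed

end

theorem mainTheorem16:
  fixes VL VR M :: "'a set" and adj :: "'a \<Rightarrow> 'a \<Rightarrow> bool" and \<Delta>L k :: nat and u :: 'a
  assumes "bipartite_graph VL VR adj"
    and "\<forall>v\<in>VL. degree adj v \<le> \<Delta>L"
    and "\<forall>v\<in>VR. degree adj v \<ge> 2"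
    and "M \<subseteq> VR"
    and "\<forall>v\<in>VL. card (nbrs adj v \<inter> M) = 1"
    and "u \<in> VL" and "k \<ge> 1"
  shows "card {S. S \<subseteq> VL \<union> VR \<and> connected_induced adj S \<and>
                 u \<in> S \<and>
                 card (S \<inter> VR) = k \<and>
                 (\<forall>v\<in>S \<inter> VR. nbrs adj v \<subseteq> S) \<and>
                 (\<forall>v\<in>S \<inter> VL. card (nbrs adj v \<inter> (S \<inter> M)) = 1 \<and>
                               card (nbrs adj v \<inter> (S \<inter> (VR - M))) = 1)}
         \<le> (\<Delta>L - 1) ^ (k - 1)"
proof -
  interpret matched_bipartite_graph VL VR M adj
    using assms(1,4,5) by unfold_locales
  show ?thesis
    using card_admissible_over_le[OF assms(6,2), of "{}" k]
    unfolding admissible_over_def admissible_def by simp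
qed

end
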